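(* A set $S$ of points of $PG(3,2)$ is a strong blocking set of size $9$ if and only if $S$ is a hyperbolic quadric $Q^{+}(3,2)$. That is, the minimal strong blocking sets of $PG(3,2)$ are exactly the hyperbolic quadrics $Q^{+}(3,2)$.
   Context: $PG(3,2)$ is the $3$-dimensional projective space over $\mathbb{F}_2$. A strong blocking set in $PG(3,2)$ is a set of points $S$ such that for every plane $\sigma$, the span $\langle \sigma\cap S\rangle$ equals $\sigma$; the minimum possible size of such a set is $9$, and a strong blocking set of size $9$ is called a minimal strong blocking set. A hyperbolic quadric $Q^{+}(3,2)$ is the set of points of $PG(3,2)$ which is the zero set of a non-degenerate quadratic form of hyperbolic type, i.e. a point set projectively equivalent to $\{(x_0:x_1:x_2:x_3): x_0x_1+x_2x_3=0\}$ (it has $9$ points). *)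

theory Defs
  imports "HOL-Analysis.Analysis" "HOL-Library.Z2"
begin

text \<open>PG(3,2): points are the nonzero vectors of the vector space bit^4 over the
  field F_2 (type bit); over F_2 each projective point has a unique nonzero
  representative. Subspaces of PG(3,2) correspond to linear subspaces of bit^4.\<close>

type_synonym pt = "bit ^ 4"

definition pg_points :: "pt set" where
  "pg_points = UNIV - {0}"

definition is_plane :: "pt set \<Rightarrow> bool" where
  "is_plane W \<longleftrightarrow> vec.subspace W \<and> vec.dim W = 3"

definition strong_blocking_set :: "pt set \<Rightarrow> bool" where
  "strong_blocking_set S \<longleftrightarrow> S \<subseteq> pg_points \<and>
     (\<forall>W. is_plane W \<longrightarrow> vec.span (S \<inter> W) = W)"

definition hyp_form :: "pt \<Rightarrow> bit" where
  "hyp_form y = y$0 * y$1 + y$2 * y$3"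

definition hyperbolic_quadric :: "pt set \<Rightarrow> bool" where
  "hyperbolic_quadric S \<longleftrightarrow>
     (\<exists>A :: bit^4^4. invertible A \<and> S = {x \<in> pg_points. hyp_form (A *v x) = 0})"

end

theory Submission
  imports Defs
begin

text \<open>Over GF(2) the four points of a plane off one of its lines are \<open>a, b, c, a + b + c\<close>
  for a triangle \<open>a, b, c\<close>. The span of \<open>S \<inter> W\<close> is a subspace of the plane \<open>W\<close>, so it
  is all of \<open>W\<close> unless \<open>S \<inter> W\<close> lies on a line of \<open>W\<close>: thus \<open>S\<close> is a strong blocking
  set iff it meets every such quadrangle, i.e. iff no four distinct points of its complement
  \<open>C\<close> sum to zero, i.e. iff \<open>C\<close> is a Sidon set. When \<open>|S| = 9\<close>, \<open>C\<close> has 6 points, whose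
  15 pairwise sums are then distinct and so exhaust the 15 points of PG(3,2). Writing each
  point of \<open>C\<close> as such a sum forces \<open>C\<close> to be the union of two skew lines
  \<open>{p, q, p + q}\<close> and \<open>{r, s, r + s}\<close>. Any two such configurations are projectively
  equivalent, and the complement of the quadric \<open>x\<^sub>0 x\<^sub>1 + x\<^sub>2 x\<^sub>3 = 0\<close> is one of them;
  conversely that complement is a Sidon set.\<close>

lemma UNIV_bit: "(UNIV :: bit set) = {0, 1}"
  by (auto intro: bit.exhaust)

instance bit :: finite
  by standard (simp add: UNIV_bit)

lemma card_pg_points: "card pg_points = 15"
proof -
  have "CARD(bit) = 2" by (simp add: UNIV_bit)
  then show ?thesis by (simp add: pg_points_def card_Diff_singleton)
qed

lemma bit_vec_add_self [simp]: "(x :: bit ^ 'n) + x = 0"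
  by (simp add: vec_eq_iff)

lemma bit_vec_add_cancel_left [simp]: "(x :: bit ^ 'n) + (x + y) = y"
  by (simp flip: add.assoc)

lemma bit_vec_diff_eq_add: "(x :: bit ^ 'n) - y = x + y"
  by (simp add: vec_eq_iff)

lemma bit_vec_add_eq_0_iff: "(x :: bit ^ 'n) + y = 0 \<longleftrightarrow> x = y"
  by (metis bit_vec_add_cancel_left add_0_right bit_vec_add_self)

lemma ex_bit: "(\<exists>k :: bit. P k) \<longleftrightarrow> P 0 \<or> P 1"
  by (metis bit.exhaust)

lemma bit_vec_span_insert:
  "vec.span (insert a B) = vec.span B \<union> (\<lambda>x. a + x) ` vec.span (B :: (bit ^ 'n) set)"
proof -
  have "x \<in> vec.span (insert a B) \<longleftrightarrow> x \<in> vec.span B \<or> a + x \<in> vec.span B" for x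
    by (simp add: vec.span_breakdown_eq ex_bit bit_vec_diff_eq_add add.commute)
  moreover have "y \<in> (\<lambda>x. a + x) ` T \<longleftrightarrow> a + y \<in> T" for y and T :: "(bit ^ 'n) set"
    by (metis bit_vec_add_cancel_left image_iff)
  ultimately show ?thesis
    by blast
qed

definition noncollinear :: "bit ^ 'n \<Rightarrow> bit ^ 'n \<Rightarrow> bit ^ 'n \<Rightarrow> bool" where
  "noncollinear a b c \<longleftrightarrow> 0 \<notin> {a, b, c, a + b, a + c, b + c, a + b + c}"

lemma noncollinear_iff_independent:
  "noncollinear a b c \<longleftrightarrow> distinct [a, b, c] \<and> vec.independent {a, b, c}"
  by (auto simp: noncollinear_def vec.independent_insert bit_vec_span_insert
      bit_vec_add_eq_0_iff ac_simps)

lemma is_plane_iff: "is_plane W \<longleftrightarrow> (\<exists>a b c. noncollinear a b c \<and> W = vec.span {a, b, c})"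
proof
  assume "is_plane W"
  then obtain B where B: "B \<subseteq> W" "vec.independent B" "W = vec.span B" "card B = 3"
    unfolding is_plane_def by (metis vec.basis_exists vec.span_subspace)
  then obtain a b c where "B = {a, b, c}" "distinct [a, b, c]"
    by (auto simp: card_3_iff)
  then show "\<exists>a b c. noncollinear a b c \<and> W = vec.span {a, b, c}"
    using B by (auto simp: noncollinear_iff_independent)
next
  assume "\<exists>a b c. noncollinear a b c \<and> W = vec.span {a, b, c}"
  then obtain a b c where "distinct [a, b, c]" "vec.independent {a, b, c}" "W = vec.span {a, b, c}"
    by (auto simp: noncollinear_iff_independent)
  then show "is_plane W"
    by (simp add: is_plane_def vec.dim_eq_card_independent)
qed

lemma noncollinear_shift:
  "noncollinear x l1 l2 \<Longrightarrow> noncollinear x (x + l1) (x + l2)"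
  by (simp add: noncollinear_def ac_simps)

lemma proper_subspace_of_plane_misses_quadrangle:
  assumes W: "is_plane W" and U: "vec.subspace U" "U \<subset> W"
  obtains a b c where "noncollinear a b c" "{a, b, c, a + b + c} \<subseteq> W - U"
proof -
  obtain B where B: "B \<subseteq> U" "vec.independent B" "U \<subseteq> vec.span B"
    by (rule vec.basis_exists)
  have U_eq: "U = vec.span B"
    by (rule vec.span_subspace[OF B(1,3) U(1), symmetric])
  have "B \<subseteq> W"
    using B(1) U(2) by blast
  then obtain B' where B': "B \<subseteq> B'" "B' \<subseteq> W" "vec.independent B'" "W \<subseteq> vec.span B'"
    using B(2) by (rule vec.maximal_independent_subset_extend)
  have W_eq: "W = vec.span B'"
    using vec.span_subspace[OF B'(2,4)] W by (simp add: is_plane_def)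
  then have "card B' = 3"
    using W B'(3) by (simp add: is_plane_def vec.dim_eq_card_independent)
  have "\<not> B' \<subseteq> B"
  proof
    assume "B' \<subseteq> B"
    then have "W \<subseteq> U"
      unfolding U_eq W_eq by (rule vec.span_mono)
    then show False
      using U(2) by blast
  qed
  then obtain x where x: "x \<in> B'" "x \<notin> B"
    by blast
  then have "card (B' - {x}) = 2"
    using \<open>card B' = 3\<close> by simp
  then obtain l1 l2 where l: "B' - {x} = {l1, l2}" "l1 \<noteq> l2"
    by (auto simp: card_2_iff)
  then have B'_eq: "B' = {x, l1, l2}" and "distinct [x, l1, l2]"
    using x(1) by auto
  then have nc: "noncollinear x l1 l2"
    using B'(3) by (simp add: noncollinear_iff_independent)
  have "B \<subseteq> {l1, l2}"
    using B'(1) x(2) l(1) by blast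
  then have "U \<subseteq> vec.span {l1, l2}"
    by (simp add: U_eq vec.span_mono)
  moreover have "{x, x + l1, x + l2, x + (x + l1) + (x + l2)} \<subseteq> W - vec.span {l1, l2}"
    using nc by (auto simp: W_eq B'_eq bit_vec_span_insert noncollinear_def ac_simps)
  ultimately show thesis
    using that[OF noncollinear_shift[OF nc]] by blast
qed

definition blocks_quadrangles :: "(bit ^ 'n) set \<Rightarrow> bool" where
  "blocks_quadrangles S \<longleftrightarrow> (\<forall>a b c. noncollinear a b c \<longrightarrow> {a, b, c, a + b + c} \<inter> S \<noteq> {})"

lemma strong_blocking_set_iff_blocks_quadrangles:
  "strong_blocking_set S \<longleftrightarrow> S \<subseteq> pg_points \<and> blocks_quadrangles S"
proof (intro iffI conjI)
  assume sbs: "strong_blocking_set S"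
  then show "S \<subseteq> pg_points"
    by (simp add: strong_blocking_set_def)
  show "blocks_quadrangles S"
    unfolding blocks_quadrangles_def
  proof (intro allI impI notI)
    fix a b c :: pt
    assume nc: "noncollinear a b c" and miss: "{a, b, c, a + b + c} \<inter> S = {}"
    define L where "L = vec.span {a + b, a + c}"
    have "(a + b) + (a + c) = b + c"
      by (simp add: ac_simps)
    then have L: "L = {0, a + b, a + c, b + c}"
      by (auto simp: L_def bit_vec_span_insert)
    have W: "vec.span {a, b, c} = {0, a, b, c, a + b, a + c, b + c, a + b + c}"
      by (simp add: bit_vec_span_insert ac_simps insert_commute)
    have "S \<inter> vec.span {a, b, c} \<subseteq> L"
      using miss unfolding L W by blast
    then have "vec.span (S \<inter> vec.span {a, b, c}) \<subseteq> L"
      unfolding L_def by (rule vec.span_minimal) simp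
    moreover have "vec.span (S \<inter> vec.span {a, b, c}) = vec.span {a, b, c}"
      using sbs nc is_plane_iff unfolding strong_blocking_set_def by blast
    ultimately have "a \<in> L"
      using vec.span_base[of a "{a, b, c}"] by blast
    then show False
      using nc unfolding L noncollinear_def by (auto simp: ac_simps)
  qed
next
  assume S: "S \<subseteq> pg_points \<and> blocks_quadrangles S"
  show "strong_blocking_set S"
    unfolding strong_blocking_set_def
  proof (intro conjI allI impI)
    fix W assume W: "is_plane W"
    then have "vec.span (S \<inter> W) \<subseteq> W"
      by (simp add: is_plane_def vec.span_minimal)
    moreover have "\<not> vec.span (S \<inter> W) \<subset> W"
    proof
      assume "vec.span (S \<inter> W) \<subset> W"
      with W obtain a b c
        where "noncollinear a b c" "{a, b, c, a + b + c} \<subseteq> W - vec.span (S \<inter> W)"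
        by (rule proper_subspace_of_plane_misses_quadrangle[OF _ vec.subspace_span])
      moreover have "S \<inter> W \<subseteq> vec.span (S \<inter> W)"
        by (rule vec.span_superset)
      ultimately show False
        using S unfolding blocks_quadrangles_def by blast
    qed
    ultimately show "vec.span (S \<inter> W) = W"
      by blast
  qed (use S in blast)
qed

text \<open>Only sums of two distinct elements are compared: in characteristic 2 all sums
  \<open>x + x\<close> coincide.\<close>

definition sidon_set :: "'a::ab_group_add set \<Rightarrow> bool" where
  "sidon_set C \<longleftrightarrow>
     (\<forall>x\<in>C. \<forall>y\<in>C. \<forall>u\<in>C. \<forall>v\<in>C. x \<noteq> y \<longrightarrow> u \<noteq> v \<longrightarrow> x + y = u + v \<longrightarrow> {x, y} = {u, v})"

lemma blocks_quadrangles_iff_sidon_set: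
  "blocks_quadrangles S \<longleftrightarrow> sidon_set (pg_points - S)"
proof
  assume bq: "blocks_quadrangles S"
  show "sidon_set (pg_points - S)"
    unfolding sidon_set_def
  proof (intro ballI impI; rule ccontr)
    fix x y u v
    assume C: "x \<in> pg_points - S" "y \<in> pg_points - S" "u \<in> pg_points - S" "v \<in> pg_points - S"
      and "x \<noteq> y" "u \<noteq> v" and sum: "x + y = u + v" and "{x, y} \<noteq> {u, v}"
    have v: "v = x + y + u"
      using sum by (metis bit_vec_add_cancel_left add.commute)
    have "x \<noteq> u" "y \<noteq> u"
      using sum \<open>{x, y} \<noteq> {u, v}\<close> by (auto simp: add.commute)
    then have "noncollinear x y u"
      using C \<open>x \<noteq> y\<close> v by (auto simp: noncollinear_def pg_points_def bit_vec_add_eq_0_iff)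
    then show False
      using bq C v unfolding blocks_quadrangles_def by blast
  qed
next
  assume sidon: "sidon_set (pg_points - S)"
  show "blocks_quadrangles S"
    unfolding blocks_quadrangles_def
  proof (intro allI impI notI)
    fix a b c :: pt
    assume nc: "noncollinear a b c" and "{a, b, c, a + b + c} \<inter> S = {}"
    then have C: "{a, b, c, a + b + c} \<subseteq> pg_points - S"
      by (auto simp: noncollinear_def pg_points_def)
    have "a \<noteq> b" "c \<noteq> a + b + c"
      using nc by (auto simp: noncollinear_def bit_vec_add_eq_0_iff)
    moreover have "a + b = c + (a + b + c)"
      by (simp add: ac_simps)
    ultimately have "{a, b} = {c, a + b + c}"
      using sidon C unfolding sidon_set_def by blast
    then show False
      using nc by (auto simp: noncollinear_def doubleton_eq_iff bit_vec_add_eq_0_iff)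
  qed
qed

lemma sidon_set_image:
  assumes "inj f" "\<And>x y. f (x + y) = f x + f y" "sidon_set C"
  shows "sidon_set (f ` C)"
  using assms unfolding sidon_set_def inj_def
  by (smt (verit, ccfv_threshold) image_empty image_insert imageE)

lemma sidon_set_pair_sums_cover:
  assumes C: "C \<subseteq> pg_points" "card C = 6" "sidon_set C" and z: "z \<in> pg_points"
  obtains x y where "x \<in> C" "y \<in> C" "x \<noteq> y" "z = x + y"
proof -
  define P where "P = {B. B \<subseteq> C \<and> card B = 2}"
  have pair: "B \<in> P \<longleftrightarrow> (\<exists>x y. x \<in> C \<and> y \<in> C \<and> x \<noteq> y \<and> B = {x, y})" for B
    by (auto simp: P_def card_2_iff)
  have "card P = 15"
    using C(2) by (simp add: P_def n_subsets choose_two)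
  moreover have "inj_on Sum P"
  proof (rule inj_onI)
    fix B1 B2
    assume "B1 \<in> P" "B2 \<in> P" and sums: "\<Sum>B1 = \<Sum>B2"
    then obtain x y u v where xy: "x \<in> C" "y \<in> C" "x \<noteq> y" "B1 = {x, y}"
      and uv: "u \<in> C" "v \<in> C" "u \<noteq> v" "B2 = {u, v}"
      unfolding pair by blast
    with sums have "x + y = u + v"
      by simp
    with xy uv C(3) show "B1 = B2"
      unfolding sidon_set_def by blast
  qed
  ultimately have "card (Sum ` P) = card pg_points"
    by (simp add: card_image card_pg_points)
  moreover have "Sum ` P \<subseteq> pg_points"
  proof
    fix z
    assume "z \<in> Sum ` P"
    then obtain B where "B \<in> P" "z = \<Sum>B"
      by blast
    then obtain x y where "x \<noteq> y" "z = x + y"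
      unfolding pair by auto
    then show "z \<in> pg_points"
      by (simp add: pg_points_def bit_vec_add_eq_0_iff)
  qed
  ultimately have "Sum ` P = pg_points"
    by (simp add: card_subset_eq)
  with z obtain B where "B \<in> P" "z = \<Sum>B"
    by blast
  then show thesis
    unfolding pair using that by auto
qed

lemma sidon_set_sum_avoids_line:
  fixes p q x y :: "bit ^ 'n"
  assumes sidon: "sidon_set C" and zero: "0 \<notin> C" and T: "{p, q, p + q} \<subseteq> C"
    and x: "x \<in> C" and y: "y \<in> C" and r: "x + y \<in> C - {p, q, p + q}"
  shows "x \<notin> {p, q, p + q}"
proof
  assume "x \<in> {p, q, p + q}"
  have "p \<noteq> 0" "q \<noteq> 0" "p \<noteq> q"
    using zero T by (auto simp: bit_vec_add_eq_0_iff)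
  obtain u w where uw: "u \<in> {p, q, p + q}" "w \<in> {p, q, p + q}" "u \<noteq> w" "x = u + w"
  proof -
    consider "x = p" | "x = q" | "x = p + q"
      using \<open>x \<in> {p, q, p + q}\<close> by blast
    then show thesis
    proof cases
      case 1
      then show thesis
        using that[of q "p + q"] \<open>p \<noteq> 0\<close> by (simp add: add.left_commute)
    next
      case 2
      then show thesis
        using that[of p "p + q"] \<open>q \<noteq> 0\<close> by simp
    next
      case 3
      then show thesis
        using that[of p q] \<open>p \<noteq> q\<close> by simp
    qed
  qed
  have "u \<in> C" "w \<in> C"
    using uw(1,2) T by blast+
  moreover have "u + w = (x + y) + y"
    using uw(4) by (simp add: add.assoc)
  moreover have "x + y \<noteq> y"
    using x zero by auto
  ultimately have "{u, w} = {x + y, y}"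
    using sidon r y uw(3) unfolding sidon_set_def by blast
  then show False
    using uw(1,2) r by blast
qed

lemma card_bit_vec_line:
  fixes p q :: "bit ^ 'n"
  assumes "p \<noteq> 0" "q \<noteq> 0" "p \<noteq> q"
  shows "card {p, q, p + q} = 3"
  using assms by simp

lemma sidon_set_six_points_two_lines:
  assumes C: "C \<subseteq> pg_points" "card C = 6" "sidon_set C"
  obtains p q r s where "C = {p, q, p + q, r, s, r + s}" "distinct [p, q, p + q, r, s, r + s]"
proof -
  have zero: "0 \<notin> C"
    using C(1) by (auto simp: pg_points_def)
  have cover: "\<exists>x y. x \<in> C \<and> y \<in> C \<and> x \<noteq> y \<and> z = x + y" if "z \<in> C" for z
  proof -
    have "z \<in> pg_points"
      using that C(1) by blast
    then obtain x y where "x \<in> C" "y \<in> C" "x \<noteq> y" "z = x + y"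
      by (rule sidon_set_pair_sums_cover[OF C])
    then show ?thesis
      by blast
  qed
  have "C \<noteq> {}"
    using C(2) by auto
  then obtain p where p: "p \<in> C"
    by blast
  then obtain q t where "q \<in> C" "t \<in> C" "p = t + q"
    using cover by blast
  moreover have "p + q = t"
    using \<open>p = t + q\<close> by (simp add: add.assoc)
  ultimately have q: "q \<in> C" "p + q \<in> C" "p \<noteq> q"
    using zero by auto
  define T where "T = {p, q, p + q}"
  have "p \<noteq> 0" "q \<noteq> 0"
    using p q zero by blast+
  then have T: "T \<subseteq> C" "card T = 3"
    using p q by (simp_all add: T_def card_bit_vec_line)
  then have "card (C - T) = 3"
    using C(2) by (simp add: card_Diff_subset)
  then have "C - T \<noteq> {}"
    by (metis card.empty zero_neq_numeral)
  then obtain x y where xy: "x \<in> C" "y \<in> C" "x \<noteq> y" "x + y \<in> C - T"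
    using cover by blast
  have "x \<notin> T" "y \<notin> T"
    using sidon_set_sum_avoids_line[OF C(3) zero, of p q] T(1) xy
    by (simp_all add: T_def add.commute)
  then have "{x, y, x + y} \<subseteq> C - T"
    using xy by blast
  moreover have "card {x, y, x + y} = 3"
    using xy zero by (intro card_bit_vec_line) auto
  ultimately have "{x, y, x + y} = C - T"
    using \<open>card (C - T) = 3\<close> by (intro card_subset_eq) simp_all
  then have C_eq: "C = {p, q, p + q, x, y, x + y}"
    using T(1) unfolding T_def by blast
  then have "distinct [p, q, p + q, x, y, x + y]"
    using C(2) by (intro card_distinct) simp
  with C_eq show thesis
    by (rule that)
qed

text \<open>The library's \<open>forall_4\<close> enumerates the indices as \<open>1, 2, 3, 4\<close>; \<open>hyp_form\<close>
  uses \<open>0, 1, 2, 3\<close>.\<close>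

lemma forall_4_0: "(\<forall>i::4. P i) \<longleftrightarrow> P 0 \<and> P 1 \<and> P 2 \<and> P 3"
proof -
  have "(4::4) = 0"
    by simp
  then show ?thesis
    by (metis exhaust_4)
qed

definition vec4 :: "bit \<Rightarrow> bit \<Rightarrow> bit \<Rightarrow> bit \<Rightarrow> pt" where
  "vec4 a b c d = (\<chi> i. if i = 0 then a else if i = 1 then b else if i = 2 then c else d)"

lemma vec4_nth [simp]:
  "vec4 a b c d $ 0 = a" "vec4 a b c d $ 1 = b" "vec4 a b c d $ 2 = c" "vec4 a b c d $ 3 = d"
  by (simp_all add: vec4_def)

lemma vec4_cases: obtains a b c d where "x = vec4 a b c d"
proof
  show "x = vec4 (x $ 0) (x $ 1) (x $ 2) (x $ 3)"
    by (simp add: vec_eq_iff forall_4_0)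
qed

lemma vec4_eq_iff [simp]: "vec4 a b c d = vec4 a' b' c' d' \<longleftrightarrow> a = a' \<and> b = b' \<and> c = c' \<and> d = d'"
  by (simp add: vec_eq_iff forall_4_0)

lemma vec4_add [simp]: "vec4 a b c d + vec4 a' b' c' d' = vec4 (a + a') (b + b') (c + c') (d + d')"
  by (simp add: vec_eq_iff forall_4_0 del: add_bit_eq_xor)

lemma vec4_eq_0_iff [simp]: "vec4 a b c d = 0 \<longleftrightarrow> a = 0 \<and> b = 0 \<and> c = 0 \<and> d = 0"
  by (simp add: vec_eq_iff forall_4_0)

lemma hyp_form_vec4 [simp]: "hyp_form (vec4 a b c d) = a * b + c * d"
  by (simp add: hyp_form_def)

definition standard_quadric :: "pt set" where
  "standard_quadric = {x \<in> pg_points. hyp_form x = 0}"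

lemma standard_quadric_complement:
  "pg_points - standard_quadric =
     {vec4 1 1 1 0, vec4 1 1 0 1, vec4 0 0 1 1, vec4 1 1 0 0, vec4 1 0 1 1, vec4 0 1 1 1}"
proof -
  have "x \<in> pg_points - standard_quadric \<longleftrightarrow>
      x \<in> {vec4 1 1 1 0, vec4 1 1 0 1, vec4 0 0 1 1, vec4 1 1 0 0, vec4 1 0 1 1, vec4 0 1 1 1}" for x
  proof (cases x rule: vec4_cases)
    case (1 a b c d)
    then show ?thesis
      by (cases a; cases b; cases c; cases d) (simp_all add: standard_quadric_def pg_points_def)
  qed
  then show ?thesis
    by blast
qed

lemma card_standard_quadric: "card standard_quadric = 9"
proof -
  have "card (pg_points - standard_quadric) = 6"
    by (simp add: standard_quadric_complement)
  then show ?thesis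
    using card_pg_points by (simp add: card_Diff_subset standard_quadric_def)
qed

lemma sidon_set_standard_quadric_complement: "sidon_set (pg_points - standard_quadric)"
  unfolding standard_quadric_complement sidon_set_def by (simp add: doubleton_eq_iff)

lemma two_skew_lines_image_standard_quadric_complement:
  fixes p q r s :: pt
  assumes "distinct [p, q, p + q, r, s, r + s]"
  obtains B where "invertible B"
    "(*v) B ` (pg_points - standard_quadric) = {p, q, p + q, r, s, r + s}"
proof -
  define col :: "4 \<Rightarrow> pt" where
    "col j = (if j = 0 then p + q + s else if j = 1 then p + q + r + s
      else if j = 2 then p + r else q + r)" for j
  define B :: "bit ^ 4 ^ 4" where "B = (\<chi> i j. col j $ i)"
  have B_vec4: "B *v vec4 a b c d =
      a *s (p + q + s) + b *s (p + q + r + s) + c *s (p + r) + d *s (q + r)" for a b c d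
    by (simp add: matrix_mult_sum column_def B_def col_def sum_4 vec4_def)
  have image: "B *v vec4 1 1 1 0 = p" "B *v vec4 1 1 0 1 = q" "B *v vec4 0 0 1 1 = p + q"
    "B *v vec4 1 1 0 0 = r" "B *v vec4 1 0 1 1 = s" "B *v vec4 0 1 1 1 = r + s"
    by (simp_all add: B_vec4 ac_simps)
  \<comment> \<open>each nonzero combination of \<open>p, q, r, s\<close> is a point of one of the two lines or the
    sum of a point of each\<close>
  have "p \<noteq> 0" "q \<noteq> 0" "p + q \<noteq> 0" "r \<noteq> 0" "s \<noteq> 0" "r + s \<noteq> 0"
    "p + r \<noteq> 0" "p + s \<noteq> 0" "p + (r + s) \<noteq> 0" "q + r \<noteq> 0" "q + s \<noteq> 0" "q + (r + s) \<noteq> 0"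
    "p + q + r \<noteq> 0" "p + q + s \<noteq> 0" "p + q + (r + s) \<noteq> 0"
    using assms by (simp_all add: bit_vec_add_eq_0_iff)
  then have "B *v vec4 a b c d = 0 \<Longrightarrow> vec4 a b c d = 0" for a b c d
    by (cases a; cases b; cases c; cases d) (simp_all add: B_vec4 ac_simps)
  then have "B *v x = 0 \<Longrightarrow> x = 0" for x
    by (cases x rule: vec4_cases) blast
  then have "invertible B"
    by (simp add: invertible_left_inverse matrix_left_invertible_ker)
  moreover have "(*v) B ` (pg_points - standard_quadric) = {p, q, p + q, r, s, r + s}"
    by (simp add: standard_quadric_complement image)
  ultimately show thesis
    by (rule that)
qed

lemma invertible_image_pg_points:
  fixes B :: "bit ^ 4 ^ 4"
  assumes "invertible B"
  shows "(*v) B ` pg_points = pg_points"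
  using assms by (simp add: invertible_eq_bij bij_is_inj bij_is_surj pg_points_def image_set_diff)

lemma invertible_image_pg_points_Diff:
  fixes B :: "bit ^ 4 ^ 4"
  assumes "invertible B"
  shows "(*v) B ` (pg_points - X) = pg_points - (*v) B ` X"
  using assms by (simp add: invertible_eq_bij bij_is_inj image_set_diff invertible_image_pg_points)

lemma invertible_vimage_eq_image:
  fixes A :: "'a::field ^ 'n ^ 'n"
  assumes "invertible A"
  obtains A' where "invertible A'" "\<And>X. (*v) A -` X = (*v) A' ` X" "\<And>X. (*v) A' -` X = (*v) A ` X"
proof -
  obtain A' where AA': "A ** A' = mat 1" "A' ** A = mat 1"
    using assms by (auto simp: invertible_def)
  then have inv: "A' *v (A *v x) = x" "A *v (A' *v x) = x" for x
    by (simp_all add: matrix_vector_mul_assoc)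
  have "(*v) A -` X = (*v) A' ` X" "(*v) A' -` X = (*v) A ` X" for X
    by (auto simp: image_iff inv) (metis inv(1), metis inv(2))
  moreover have "invertible A'"
    using AA' by (auto simp: invertible_def)
  ultimately show thesis
    using that by blast
qed

lemma hyperbolic_quadric_iff_image:
  "hyperbolic_quadric S \<longleftrightarrow> (\<exists>B. invertible B \<and> S = (*v) B ` standard_quadric)"
proof -
  have vimage: "{x \<in> pg_points. hyp_form (A *v x) = 0} = (*v) A -` standard_quadric"
    if "invertible A" for A :: "bit ^ 4 ^ 4"
  proof -
    have "inj ((*v) A)"
      using that by (simp add: invertible_eq_bij bij_is_inj)
    then have "A *v x = 0 \<longleftrightarrow> x = 0" for x
      by (metis injD matrix_vector_mult_0_right)
    then show ?thesis
      by (auto simp: standard_quadric_def pg_points_def)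
  qed
  show ?thesis
  proof
    assume "hyperbolic_quadric S"
    then obtain A where "invertible A" "S = (*v) A -` standard_quadric"
      unfolding hyperbolic_quadric_def using vimage by blast
    then show "\<exists>B. invertible B \<and> S = (*v) B ` standard_quadric"
      by (metis invertible_vimage_eq_image)
  next
    assume "\<exists>B. invertible B \<and> S = (*v) B ` standard_quadric"
    then obtain A where "invertible A" "S = (*v) A -` standard_quadric"
      by (metis invertible_vimage_eq_image)
    then show "hyperbolic_quadric S"
      unfolding hyperbolic_quadric_def using vimage by blast
  qed
qed

lemma hyperbolic_quadricI:
  assumes S: "S \<subseteq> pg_points" "card S = 9" and sidon: "sidon_set (pg_points - S)"
  shows "hyperbolic_quadric S"
proof -
  have "card (pg_points - S) = 6"
    using S by (simp add: card_Diff_subset card_pg_points)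
  then obtain p q r s
    where C: "pg_points - S = {p, q, p + q, r, s, r + s}" "distinct [p, q, p + q, r, s, r + s]"
    using sidon by (rule sidon_set_six_points_two_lines[OF Diff_subset])
  obtain B where B: "invertible B" "(*v) B ` (pg_points - standard_quadric) = pg_points - S"
    using two_skew_lines_image_standard_quadric_complement[OF C(2)] unfolding C(1) .
  have "(*v) B ` standard_quadric \<subseteq> pg_points"
    unfolding standard_quadric_def using invertible_image_pg_points[OF B(1)] by blast
  then have "pg_points - (pg_points - S) = (*v) B ` standard_quadric"
    by (simp flip: B(2) add: invertible_image_pg_points_Diff[OF B(1)] double_diff)
  then have "S = (*v) B ` standard_quadric"
    using S(1) by (simp add: double_diff)
  then show ?thesis
    using B(1) hyperbolic_quadric_iff_image by blast
qed

lemma hyperbolic_quadricD: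
  assumes "hyperbolic_quadric S"
  shows "S \<subseteq> pg_points" "card S = 9" "sidon_set (pg_points - S)"
proof -
  obtain B where B: "invertible B" "S = (*v) B ` standard_quadric"
    using assms hyperbolic_quadric_iff_image by blast
  have inj: "inj ((*v) B)"
    using B(1) by (simp add: invertible_eq_bij bij_is_inj)
  have complement: "pg_points - S = (*v) B ` (pg_points - standard_quadric)"
    using B by (simp add: invertible_image_pg_points_Diff)
  show "S \<subseteq> pg_points"
    unfolding B(2) standard_quadric_def using invertible_image_pg_points[OF B(1)] by blast
  show "card S = 9"
    using B(2) inj by (simp add: card_image inj_on_subset card_standard_quadric)
  show "sidon_set (pg_points - S)"
    unfolding complement
    by (rule sidon_set_image[OF inj])
      (simp_all add: matrix_vector_right_distrib sidon_set_standard_quadric_complement)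
qed

theorem theorem2p3:
  fixes S :: "pt set"
  shows "(strong_blocking_set S \<and> card S = 9) \<longleftrightarrow> hyperbolic_quadric S"
  using hyperbolic_quadricI hyperbolic_quadricD
  by (auto simp: strong_blocking_set_iff_blocks_quadrangles blocks_quadrangles_iff_sidon_set)

end
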